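(* Let $a<b<c$ be elements of $\mathcal{C}_n$. An element $\alpha$ of the triangle $\triangle^{(n)}\{a,b,c\}$ is an idempotent lying in the interior of the triangle if and only if $\alpha$ is a right identity of $\triangle^{(n)}\{a,b,c\}$.
   Context: $\mathcal{C}_n=\{0,1,\dots,n-1\}$ with its usual order; $\widehat{\mathcal{E}}_{\mathcal{C}_n}$ is the set of all order-preserving maps $\mathcal{C}_n\to\mathcal{C}_n$ (not required to fix $0$), a semiring with $(\alpha+\beta)(x)=\max(\alpha(x),\beta(x))$ and $(\alpha\cdot\beta)(x)=\beta(\alpha(x))$. The triangle $\triangle^{(n)}\{a,b,c\}$ is the set of all $\alpha\in\widehat{\mathcal{E}}_{\mathcal{C}_n}$ with image in $\{a,b,c\}$; its interior is the set of its elements whose image is exactly $\{a,b,c\}$ (i.e. not lying in any of the strings of maps with image in $\{a,b\}$, $\{a,c\}$ or $\{b,c\}$). Idempotent means $\alpha\cdot\alpha=\alpha$; a right identity is $e$ with $\beta\cdot e=\beta$ for all $\beta$ in the triangle. *)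

theory Defs
  imports Main
begin

text \<open>Maps C_n -> C_n are represented as functions nat => nat, extensional:
  they take the value 0 outside {0..<n}, so that HOL equality coincides with
  equality of maps on C_n.\<close>

definition chainC :: "nat \<Rightarrow> nat set" where
  "chainC n = {..<n}"

definition Ehat :: "nat \<Rightarrow> (nat \<Rightarrow> nat) set" where
  "Ehat n = {f. (\<forall>x<n. f x < n) \<and> (\<forall>x y. x \<le> y \<and> y < n \<longrightarrow> f x \<le> f y)
              \<and> (\<forall>x. n \<le> x \<longrightarrow> f x = 0)}"

definition emult :: "nat \<Rightarrow> (nat \<Rightarrow> nat) \<Rightarrow> (nat \<Rightarrow> nat) \<Rightarrow> (nat \<Rightarrow> nat)" where
  "emult n \<alpha> \<beta> = (\<lambda>x. if x < n then \<beta> (\<alpha> x) else 0)"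

definition triangle :: "nat \<Rightarrow> nat \<Rightarrow> nat \<Rightarrow> nat \<Rightarrow> (nat \<Rightarrow> nat) set" where
  "triangle n a b c = {\<alpha> \<in> Ehat n. \<alpha> ` chainC n \<subseteq> {a, b, c}}"

definition triangle_interior :: "nat \<Rightarrow> nat \<Rightarrow> nat \<Rightarrow> nat \<Rightarrow> (nat \<Rightarrow> nat) set" where
  "triangle_interior n a b c = {\<alpha> \<in> triangle n a b c. \<alpha> ` chainC n = {a, b, c}}"

definition idempotent_E :: "nat \<Rightarrow> (nat \<Rightarrow> nat) \<Rightarrow> bool" where
  "idempotent_E n \<alpha> \<longleftrightarrow> emult n \<alpha> \<alpha> = \<alpha>"

definition right_identity :: "nat \<Rightarrow> (nat \<Rightarrow> nat) set \<Rightarrow> (nat \<Rightarrow> nat) \<Rightarrow> bool" where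
  "right_identity n S e \<longleftrightarrow> (\<forall>\<beta>\<in>S. emult n \<beta> e = \<beta>)"

end

theory Submission
  imports Defs
begin

text \<open>Both sides say that \<alpha> fixes a, b and c: an idempotent is exactly a map fixing
  its own image, and testing the right identity against the constant maps onto a, b
  and c forces \<alpha> to fix each vertex, which conversely suffices since every element
  of the triangle takes its values in {a, b, c}.\<close>

lemma idempotent_E_iff_fixes_image:
  assumes "\<alpha> \<in> Ehat n"
  shows "idempotent_E n \<alpha> \<longleftrightarrow> (\<forall>y \<in> \<alpha> ` chainC n. \<alpha> y = y)"
proof
  assume "idempotent_E n \<alpha>"
  then have "\<alpha> (\<alpha> x) = \<alpha> x" if "x < n" for x
    using that fun_cong[of "emult n \<alpha> \<alpha>" \<alpha> x] unfolding idempotent_E_def emult_def by simp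
  then show "\<forall>y \<in> \<alpha> ` chainC n. \<alpha> y = y"
    unfolding chainC_def by auto
next
  assume "\<forall>y \<in> \<alpha> ` chainC n. \<alpha> y = y"
  then show "idempotent_E n \<alpha>"
    using assms unfolding idempotent_E_def emult_def chainC_def Ehat_def by fastforce
qed

lemma idempotent_with_image_iff_fixes:
  assumes "\<alpha> \<in> Ehat n" and "\<alpha> ` chainC n \<subseteq> S" and "S \<subseteq> chainC n"
  shows "(idempotent_E n \<alpha> \<and> \<alpha> ` chainC n = S) \<longleftrightarrow> (\<forall>y \<in> S. \<alpha> y = y)"
proof
  assume "\<forall>y \<in> S. \<alpha> y = y"
  then have "S \<subseteq> \<alpha> ` chainC n"
    using assms(3) by (metis image_eqI subsetI subsetD)
  with assms \<open>\<forall>y \<in> S. \<alpha> y = y\<close> show "idempotent_E n \<alpha> \<and> \<alpha> ` chainC n = S"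
    by (auto simp: idempotent_E_iff_fixes_image)
qed (use assms in \<open>auto simp: idempotent_E_iff_fixes_image\<close>)

lemma right_identity_triangle_iff_fixes:
  assumes "a < n" and "b < n" and "c < n"
  shows "right_identity n (triangle n a b c) \<alpha> \<longleftrightarrow> (\<forall>y \<in> {a, b, c}. \<alpha> y = y)"
proof
  assume right_id: "right_identity n (triangle n a b c) \<alpha>"
  show "\<forall>y \<in> {a, b, c}. \<alpha> y = y"
  proof
    fix y assume y: "y \<in> {a, b, c}"
    define const where "const = (\<lambda>x::nat. if x < n then y else 0)"
    have "y < n" using y assms by auto
    then have "const \<in> triangle n a b c"
      using y unfolding triangle_def Ehat_def chainC_def const_def by auto
    with right_id have "emult n const \<alpha> 0 = const 0"
      unfolding right_identity_def by simp
    with \<open>y < n\<close> show "\<alpha> y = y"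
      unfolding emult_def const_def by simp
  qed
next
  assume fixed: "\<forall>y \<in> {a, b, c}. \<alpha> y = y"
  show "right_identity n (triangle n a b c) \<alpha>"
    unfolding right_identity_def
  proof
    fix \<beta> assume "\<beta> \<in> triangle n a b c"
    then have "\<forall>x < n. \<beta> x \<in> {a, b, c}" and "\<forall>x. n \<le> x \<longrightarrow> \<beta> x = 0"
      unfolding triangle_def Ehat_def chainC_def by auto
    with fixed show "emult n \<beta> \<alpha> = \<beta>"
      unfolding emult_def by fastforce
  qed
qed

theorem proposition32:
  fixes n a b c :: nat and \<alpha> :: "nat \<Rightarrow> nat"
  assumes "a < b" and "b < c" and "c < n"
    and "\<alpha> \<in> triangle n a b c"
  shows "(idempotent_E n \<alpha> \<and> \<alpha> \<in> triangle_interior n a b c)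
         \<longleftrightarrow> right_identity n (triangle n a b c) \<alpha>"
proof -
  have vertices: "{a, b, c} \<subseteq> chainC n"
    using assms(1-3) unfolding chainC_def by auto
  have "\<alpha> \<in> Ehat n" and "\<alpha> ` chainC n \<subseteq> {a, b, c}"
    using assms(4) unfolding triangle_def by auto
  then have "(idempotent_E n \<alpha> \<and> \<alpha> ` chainC n = {a, b, c}) \<longleftrightarrow> (\<forall>y \<in> {a, b, c}. \<alpha> y = y)"
    using vertices by (rule idempotent_with_image_iff_fixes)
  also have "\<dots> \<longleftrightarrow> right_identity n (triangle n a b c) \<alpha>"
    using assms(1-3) by (simp add: right_identity_triangle_iff_fixes)
  finally show ?thesis
    using assms(4) unfolding triangle_interior_def by blast
qed

end
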